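(* Let $\Gamma$ be a group acting on a set $X$ with only finitely many orbits, and let $n \in \mathbb{N}$. If for each orbit the stabilizer of a point of that orbit is $n$-boundedly acyclic, then $\operatorname{H}^k_b(\Gamma;\ell^\infty(X)) \cong 0$ for all $k \in \{1,\dots,n\}$.
   Context: $\ell^\infty(X)$ is the Banach $\Gamma$-module of bounded real functions on $X$ with the sup norm and action $(g\cdot f)(x) = f(g^{-1}x)$; $\operatorname{H}^*_b(\Gamma;V)$ is the cohomology of $\ell^\infty(\Gamma^{*+1},V)^\Gamma$ with homogeneous coboundary. A group is $n$-boundedly acyclic if its bounded cohomology with trivial real coefficients vanishes in degrees $1,\dots,n$. *)

theory Defs
  imports Complex_Main "HOL-Algebra.Group_Action"
begin

text \<open>Bounded cohomology of a group G with coefficients in the Banach G-module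
  ell-infinity(Y), where G acts on Y via psi and (g.F)(y) = F(g^-1 y).
  Homogeneous cochains of degree k are maps from G^(k+1) (lists of length k+1 of
  elements of the carrier) to ell-infinity(Y) (real functions on Y, only values on Y
  matter); they must be bounded in the sup norm and G-invariant.\<close>

definition tuples :: "('g, 'm) monoid_scheme \<Rightarrow> nat \<Rightarrow> 'g list set" where
  "tuples G m = {t. length t = m \<and> set t \<subseteq> carrier G}"

definition coboundary :: "('g list \<Rightarrow> 'y \<Rightarrow> real) \<Rightarrow> 'g list \<Rightarrow> 'y \<Rightarrow> real" where
  "coboundary f t y = (\<Sum>i<length t. (-1) ^ i * f (take i t @ drop (Suc i) t) y)"

definition is_bcochain ::
  "('g, 'm) monoid_scheme \<Rightarrow> 'y set \<Rightarrow> ('g \<Rightarrow> 'y \<Rightarrow> 'y) \<Rightarrow> nat \<Rightarrow> ('g list \<Rightarrow> 'y \<Rightarrow> real) \<Rightarrow> bool" where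
  "is_bcochain G Y \<psi> k f \<longleftrightarrow>
     (\<exists>C. \<forall>t\<in>tuples G (k+1). \<forall>y\<in>Y. \<bar>f t y\<bar> \<le> C) \<and>
     (\<forall>g\<in>carrier G. \<forall>t\<in>tuples G (k+1). \<forall>y\<in>Y.
        f (map (\<lambda>h. g \<otimes>\<^bsub>G\<^esub> h) t) y = f t (\<psi> (inv\<^bsub>G\<^esub> g) y))"

definition Hb_linf_vanishes ::
  "('g, 'm) monoid_scheme \<Rightarrow> 'y set \<Rightarrow> ('g \<Rightarrow> 'y \<Rightarrow> 'y) \<Rightarrow> nat \<Rightarrow> bool" where
  "Hb_linf_vanishes G Y \<psi> k \<longleftrightarrow>
     (\<forall>f. is_bcochain G Y \<psi> k f \<and>
          (\<forall>t\<in>tuples G (k+2). \<forall>y\<in>Y. coboundary f t y = 0)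
        \<longrightarrow> (\<exists>b. is_bcochain G Y \<psi> (k-1) b \<and>
                 (\<forall>t\<in>tuples G (k+1). \<forall>y\<in>Y. coboundary b t y = f t y)))"

text \<open>Trivial real coefficients: R = ell-infinity(point) with the trivial action.\<close>
definition Hb_trivial_vanishes :: "('g, 'm) monoid_scheme \<Rightarrow> nat \<Rightarrow> bool" where
  "Hb_trivial_vanishes G k \<longleftrightarrow> Hb_linf_vanishes G (UNIV :: unit set) (\<lambda>g y. y) k"

definition boundedly_acyclic :: "nat \<Rightarrow> ('g, 'm) monoid_scheme \<Rightarrow> bool" where
  "boundedly_acyclic n G \<longleftrightarrow> (\<forall>k\<in>{1..n}. Hb_trivial_vanishes G k)"

end

theory Submission
  imports Defs
begin

text \<open>Evaluating a bounded invariant cocycle \<open>f\<close> with values in \<open>\<ell>\<^sup>\<infinity>(X)\<close> at a point \<open>x\<close>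
  gives a real cocycle on \<open>\<Gamma>\<^sup>k\<^sup>+\<^sup>1\<close> invariant under the stabilizer \<open>\<Gamma>\<^sub>x\<close>. Such cocycles
  are coboundaries as soon as \<open>\<Gamma>\<^sub>x\<close> is boundedly acyclic: a \<open>\<Gamma>\<^sub>x\<close>-equivariant retraction
  \<open>\<sigma> : \<Gamma> \<rightarrow> \<Gamma>\<^sub>x\<close> and the prism operator make \<open>f(-, x)\<close> cohomologous to its pullback
  along \<open>\<sigma>\<close>, which is a cocycle of \<open>\<Gamma>\<^sub>x\<close> itself. Choosing one point \<open>x\<close> per orbit and
  elements \<open>\<gamma>\<^sub>y\<close> with \<open>\<gamma>\<^sub>y x = y\<close>, the primitives \<open>B\<^sub>x\<close> so obtained assemble into the
  invariant primitive \<open>b(t, y) = B\<^sub>x(\<gamma>\<^sub>y\<inverse> t)\<close> of \<open>f\<close>; it is bounded because there are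
  only finitely many orbits.\<close>

section \<open>Faces and the prism operator\<close>

definition face :: "nat \<Rightarrow> 'a list \<Rightarrow> 'a list" where
  "face i t = take i t @ drop (Suc i) t"

definition hcoboundary :: "('a list \<Rightarrow> real) \<Rightarrow> 'a list \<Rightarrow> real" where
  "hcoboundary F t = (\<Sum>i<length t. (-1) ^ i * F (face i t))"

text \<open>The simplices \<open>(s t\<^sub>0, \<dots>, s t\<^sub>j, t\<^sub>j, \<dots>, t\<^sub>n)\<close> of the standard triangulation of the
  prism \<open>\<Delta>\<^sup>n \<times> [0,1]\<close>; their alternating sum is a chain homotopy between the identity and \<open>s\<close>.\<close>

definition prism_simplex :: "('a \<Rightarrow> 'a) \<Rightarrow> nat \<Rightarrow> 'a list \<Rightarrow> 'a list" where
  "prism_simplex s j t = map s (take (Suc j) t) @ drop j t"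

definition prism_operator :: "('a \<Rightarrow> 'a) \<Rightarrow> ('a list \<Rightarrow> real) \<Rightarrow> 'a list \<Rightarrow> real" where
  "prism_operator s F t = (\<Sum>j<length t. (-1) ^ j * F (prism_simplex s j t))"

lemma coboundary_eq_hcoboundary: "coboundary f t y = hcoboundary (\<lambda>s. f s y) t"
  by (simp add: coboundary_def hcoboundary_def face_def)

lemma length_face [simp]: "i < length t \<Longrightarrow> length (face i t) = length t - 1"
  by (simp add: face_def)

lemma nth_face:
  "i < length t \<Longrightarrow> m < length t - 1 \<Longrightarrow> face i t ! m = (if m < i then t ! m else t ! Suc m)"
  by (auto simp: face_def nth_append min_def)

lemma face_map: "face i (map f t) = map f (face i t)"
  by (simp add: face_def take_map drop_map)

lemma length_prism_simplex [simp]: "j < length t \<Longrightarrow> length (prism_simplex s j t) = Suc (length t)"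
  by (simp add: prism_simplex_def)

lemma nth_prism_simplex:
  assumes "j < length t" "m < Suc (length t)"
  shows "prism_simplex s j t ! m = (if m \<le> j then s (t ! m) else t ! (m - 1))"
  using assms by (auto simp: prism_simplex_def nth_append min_def intro!: arg_cong[where f = "nth t"])

lemma set_prism_simplex: "set (prism_simplex s j t) \<subseteq> s ` set t \<union> set t"
  unfolding prism_simplex_def by (auto dest: in_set_takeD in_set_dropD)

lemma prism_simplex_map:
  "(\<And>x. x \<in> set t \<Longrightarrow> s (f x) = f (s x)) \<Longrightarrow> prism_simplex s j (map f t) = map f (prism_simplex s j t)"
  unfolding prism_simplex_def take_map drop_map map_append map_map
  by (auto dest: in_set_takeD)

lemma face_prism_simplex_less:
  "j < length t \<Longrightarrow> i < j \<Longrightarrow> face i (prism_simplex s j t) = prism_simplex s (j - 1) (face i t)"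
  by (rule nth_equalityI) (auto simp: nth_face nth_prism_simplex)

lemma face_prism_simplex_self:
  "j < length t \<Longrightarrow> face j (prism_simplex s j t) = map s (take j t) @ drop j t"
  by (rule nth_equalityI) (auto simp: nth_face nth_prism_simplex nth_append)

lemma face_Suc_prism_simplex_self:
  "j < length t \<Longrightarrow> face (Suc j) (prism_simplex s j t) = map s (take (Suc j) t) @ drop (Suc j) t"
  by (rule nth_equalityI) (auto simp: nth_face nth_prism_simplex nth_append)

lemma face_prism_simplex_greater:
  "j < length t \<Longrightarrow> Suc j < i \<Longrightarrow> i \<le> length t \<Longrightarrow>
    face i (prism_simplex s j t) = prism_simplex s j (face (i - 1) t)"
  by (rule nth_equalityI) (auto simp: nth_face nth_prism_simplex)

lemma sum_lessThan_Suc_split: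
  assumes "j < n"
  shows "sum g {..<Suc n} = sum g {..<j} + g j + g (Suc j) + sum g {Suc (Suc j)..<Suc n}"
proof -
  have "sum g {0..<Suc (Suc j)} + sum g {Suc (Suc j)..<Suc n} = sum g {0..<Suc n}"
    by (rule sum.atLeastLessThan_concat) (use assms in auto)
  then show ?thesis
    by (simp add: atLeast0LessThan)
qed

lemma hcoboundary_prism_simplex:
  assumes j: "j < length t"
  shows "(-1) ^ j * hcoboundary F (prism_simplex s j t) =
    F (map s (take j t) @ drop j t) - F (map s (take (Suc j) t) @ drop (Suc j) t)
    - (\<Sum>i<j. (-1) ^ (i + (j - 1)) * F (prism_simplex s (j - 1) (face i t)))
    - (\<Sum>i\<in>{Suc j..<length t}. (-1) ^ (i + j) * F (prism_simplex s j (face i t)))"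
proof -
  let ?g = "\<lambda>i. (-1) ^ j * ((-1) ^ i * F (face i (prism_simplex s j t)))"
  have "(-1) ^ j * hcoboundary F (prism_simplex s j t) = sum ?g {..<Suc (length t)}"
    using j by (simp add: hcoboundary_def sum_distrib_left del: sum.lessThan_Suc)
  also have "\<dots> = sum ?g {..<j} + ?g j + ?g (Suc j) + sum ?g {Suc (Suc j)..<Suc (length t)}"
    using j by (rule sum_lessThan_Suc_split)
  also have "sum ?g {..<j} = - (\<Sum>i<j. (-1) ^ (i + (j - 1)) * F (prism_simplex s (j - 1) (face i t)))"
    unfolding sum_negf[symmetric]
  proof (intro sum.cong refl)
    fix i assume "i \<in> {..<j}"
    then obtain j' where "j = Suc j'" "i < j"
      using less_imp_Suc_add by auto
    then show "?g i = - ((-1) ^ (i + (j - 1)) * F (prism_simplex s (j - 1) (face i t)))"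
      using j by (simp add: face_prism_simplex_less power_add)
  qed
  also have "?g j = F (map s (take j t) @ drop j t)"
    using j by (simp add: face_prism_simplex_self flip: power_add mult.assoc)
  also have "?g (Suc j) = - F (map s (take (Suc j) t) @ drop (Suc j) t)"
    using j by (simp add: face_Suc_prism_simplex_self flip: power_add mult.assoc)
  also have "sum ?g {Suc (Suc j)..<Suc (length t)} = (\<Sum>i\<in>{Suc j..<length t}. ?g (Suc i))"
    by (rule sum.shift_bounds_Suc_ivl)
  also have "\<dots> = - (\<Sum>i\<in>{Suc j..<length t}. (-1) ^ (i + j) * F (prism_simplex s j (face i t)))"
    unfolding sum_negf[symmetric]
    by (intro sum.cong refl) (use j in \<open>auto simp: face_prism_simplex_greater power_add\<close>)
  finally show ?thesis
    by simp
qed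

lemma sum_triangles_reindex:
  "(\<Sum>j<n. \<Sum>i<j. a (j - 1) i) + (\<Sum>j<n. \<Sum>i\<in>{Suc j..<n}. a j i) = (\<Sum>j<n - 1. \<Sum>i<n. a j i)"
proof (cases n)
  case (Suc m)
  have "(\<Sum>j<Suc m. \<Sum>i<j. a (j - 1) i) = (\<Sum>j<m. \<Sum>i<Suc j. a j i)"
    by (simp only: sum.lessThan_Suc_shift) simp
  moreover have "(\<Sum>j<Suc m. \<Sum>i\<in>{Suc j..<Suc m}. a j i) = (\<Sum>j<m. \<Sum>i\<in>{Suc j..<Suc m}. a j i)"
    by simp
  moreover have "(\<Sum>i<Suc j. a j i) + (\<Sum>i\<in>{Suc j..<Suc m}. a j i) = (\<Sum>i<Suc m. a j i)"
    if "j < m" for j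
  proof -
    have "sum (a j) {0..<Suc j} + sum (a j) {Suc j..<Suc m} = sum (a j) {0..<Suc m}"
      by (rule sum.atLeastLessThan_concat) (use that in auto)
    then show ?thesis
      by (simp only: atLeast0LessThan)
  qed
  ultimately show ?thesis
    using Suc by (simp add: sum.distrib[symmetric])
qed simp

lemma hcoboundary_prism_operator:
  "hcoboundary (prism_operator s F) t + prism_operator s (hcoboundary F) t = F t - F (map s t)"
proof -
  define n where "n = length t"
  define T where "T j i = (-1) ^ (i + j) * F (prism_simplex s j (face i t))" for j i
  define R where "R j = F (map s (take j t) @ drop j t)" for j
  have "prism_operator s (hcoboundary F) t =
      (\<Sum>j<n. (R j - R (Suc j)) - (\<Sum>i<j. T (j - 1) i) - (\<Sum>i\<in>{Suc j..<n}. T j i))"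
    unfolding prism_operator_def n_def R_def T_def
    by (intro sum.cong refl) (simp add: hcoboundary_prism_simplex)
  also have "\<dots> = (\<Sum>j<n. R j - R (Suc j)) - ((\<Sum>j<n. \<Sum>i<j. T (j - 1) i) + (\<Sum>j<n. \<Sum>i\<in>{Suc j..<n}. T j i))"
    by (simp add: sum_subtractf sum.distrib)
  also have "\<dots> = (R 0 - R n) - (\<Sum>j<n - 1. \<Sum>i<n. T j i)"
    by (simp only: sum_lessThan_telescope' sum_triangles_reindex)
  also have "R 0 = F t"
    by (simp add: R_def)
  also have "R n = F (map s t)"
    by (simp add: R_def n_def)
  also have "(\<Sum>j<n - 1. \<Sum>i<n. T j i) = hcoboundary (prism_operator s F) t"
    unfolding hcoboundary_def prism_operator_def T_def n_def
    by (subst sum.swap) (auto intro!: sum.cong simp: sum_distrib_left power_add mult_ac)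
  finally show ?thesis
    by simp
qed

lemma hcoboundary_prism_operator_cocycle:
  assumes "\<And>j. j < length t \<Longrightarrow> hcoboundary F (prism_simplex s j t) = 0"
  shows "hcoboundary (prism_operator s F) t = F t - F (map s t)"
proof -
  have "prism_operator s (hcoboundary F) t = 0"
    unfolding prism_operator_def using assms by simp
  then show ?thesis
    using hcoboundary_prism_operator[of s F t] by simp
qed

lemma abs_prism_operator_le:
  assumes "\<And>j. j < length t \<Longrightarrow> \<bar>F (prism_simplex s j t)\<bar> \<le> C"
  shows "\<bar>prism_operator s F t\<bar> \<le> real (length t) * C"
proof -
  have "\<bar>prism_operator s F t\<bar> \<le> (\<Sum>j<length t. \<bar>F (prism_simplex s j t)\<bar>)"
    unfolding prism_operator_def by (rule order.trans[OF sum_abs]) (simp add: abs_mult)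
  also have "\<dots> \<le> real (length t) * C"
    using sum_bounded_above[of "{..<length t}" "\<lambda>j. \<bar>F (prism_simplex s j t)\<bar>" C] assms by simp
  finally show ?thesis .
qed

lemma prism_operator_map:
  "(\<And>x. x \<in> set t \<Longrightarrow> s (f x) = f (s x)) \<Longrightarrow>
    prism_operator s F (map f t) = prism_operator s (\<lambda>u. F (map f u)) t"
  by (simp add: prism_operator_def prism_simplex_map)

lemma hcoboundary_map: "hcoboundary (\<lambda>u. F (map f u)) t = hcoboundary F (map f t)"
  by (simp add: hcoboundary_def face_map)

lemma hcoboundary_add: "hcoboundary (\<lambda>u. F u + F' u) t = hcoboundary F t + hcoboundary F' t"
  by (simp add: hcoboundary_def sum.distrib distrib_left)

definition invariant_bcochain :: "('g, 'm) monoid_scheme \<Rightarrow> 'g set \<Rightarrow> nat \<Rightarrow> ('g list \<Rightarrow> real) \<Rightarrow> bool" where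
  "invariant_bcochain G H k F \<longleftrightarrow>
     (\<exists>C. \<forall>t\<in>tuples G (k+1). \<bar>F t\<bar> \<le> C) \<and>
     (\<forall>h\<in>H. \<forall>t\<in>tuples G (k+1). F (map (\<lambda>x. h \<otimes>\<^bsub>G\<^esub> x) t) = F t)"

lemma invariant_bcochain_add:
  assumes "invariant_bcochain G H k F" "invariant_bcochain G H k F'"
  shows "invariant_bcochain G H k (\<lambda>t. F t + F' t)"
proof -
  obtain C C' where "\<forall>t\<in>tuples G (k+1). \<bar>F t\<bar> \<le> C" "\<forall>t\<in>tuples G (k+1). \<bar>F' t\<bar> \<le> C'"
    using assms unfolding invariant_bcochain_def by blast
  then have "\<forall>t\<in>tuples G (k+1). \<bar>F t + F' t\<bar> \<le> C + C'"
    by (meson abs_triangle_ineq add_mono order_trans)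
  with assms show ?thesis
    unfolding invariant_bcochain_def by auto
qed

lemma tuples_subgroupD: "H \<subseteq> carrier G \<Longrightarrow> t \<in> tuples (G\<lparr>carrier := H\<rparr>) m \<Longrightarrow> t \<in> tuples G m"
  by (auto simp: tuples_def)

lemma invariant_bcochain_subgroup:
  assumes H: "H \<subseteq> carrier G" and F: "invariant_bcochain G H k F"
  shows "invariant_bcochain (G\<lparr>carrier := H\<rparr>) H k F"
proof -
  obtain C where "\<forall>t\<in>tuples G (k+1). \<bar>F t\<bar> \<le> C"
    using F unfolding invariant_bcochain_def by blast
  then have "\<forall>t\<in>tuples (G\<lparr>carrier := H\<rparr>) (k+1). \<bar>F t\<bar> \<le> C"
    using tuples_subgroupD[OF H] by blast
  moreover have "\<forall>h\<in>H. \<forall>t\<in>tuples (G\<lparr>carrier := H\<rparr>) (k+1). F (map (\<lambda>x. h \<otimes>\<^bsub>G\<^esub> x) t) = F t"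
    using F tuples_subgroupD[OF H] unfolding invariant_bcochain_def by blast
  ultimately show ?thesis
    unfolding invariant_bcochain_def by auto
qed

lemma Hb_trivial_vanishesD:
  assumes "Hb_trivial_vanishes G k" "invariant_bcochain G (carrier G) k F"
    and "\<forall>t\<in>tuples G (k+2). hcoboundary F t = 0"
  obtains b where "invariant_bcochain G (carrier G) (k - 1) b"
    and "\<forall>t\<in>tuples G (k+1). hcoboundary b t = F t"
proof -
  have "is_bcochain G (UNIV :: unit set) (\<lambda>g y. y) k (\<lambda>t y. F t)"
    using assms(2) by (simp add: is_bcochain_def invariant_bcochain_def)
  moreover have "\<forall>t\<in>tuples G (k+2). \<forall>y\<in>UNIV. coboundary (\<lambda>t y. F t) t y = 0"
    using assms(3) by (simp add: coboundary_eq_hcoboundary)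
  ultimately obtain b :: "'a list \<Rightarrow> unit \<Rightarrow> real"
    where b: "is_bcochain G UNIV (\<lambda>g y. y) (k - 1) b"
      and b_cob: "\<forall>t\<in>tuples G (k+1). \<forall>y\<in>UNIV. coboundary b t y = F t"
    using assms(1)[unfolded Hb_trivial_vanishes_def Hb_linf_vanishes_def, rule_format, of "\<lambda>t y. F t"]
    by blast
  show thesis
  proof (rule that[of "\<lambda>t. b t ()"])
    show "invariant_bcochain G (carrier G) (k - 1) (\<lambda>t. b t ())"
      using b by (simp add: is_bcochain_def invariant_bcochain_def)
    show "\<forall>t\<in>tuples G (k+1). hcoboundary (\<lambda>t. b t ()) t = F t"
      using b_cob by (simp add: coboundary_eq_hcoboundary)
  qed
qed

lemma Hb_trivial_vanishes_subgroupD: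
  assumes H: "H \<subseteq> carrier G" and acyclic: "Hb_trivial_vanishes (G\<lparr>carrier := H\<rparr>) (Suc k)"
    and F: "invariant_bcochain G H (Suc k) F"
    and F_cocycle: "\<forall>t\<in>tuples G (Suc k + 2). hcoboundary F t = 0"
  obtains b where "invariant_bcochain (G\<lparr>carrier := H\<rparr>) H k b"
    and "\<forall>t\<in>tuples (G\<lparr>carrier := H\<rparr>) (Suc k + 1). hcoboundary b t = F t"
proof (rule Hb_trivial_vanishesD[OF acyclic])
  show "invariant_bcochain (G\<lparr>carrier := H\<rparr>) (carrier (G\<lparr>carrier := H\<rparr>)) (Suc k) F"
    using invariant_bcochain_subgroup[OF H F] by simp
  show "\<forall>t\<in>tuples (G\<lparr>carrier := H\<rparr>) (Suc k + 2). hcoboundary F t = 0"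
    using F_cocycle tuples_subgroupD[OF H] by blast
qed (use that in simp)


lemma prism_simplex_in_tuples:
  assumes "\<And>g. g \<in> carrier G \<Longrightarrow> s g \<in> carrier G" "t \<in> tuples G m" "j < m"
  shows "prism_simplex s j t \<in> tuples G (Suc m)"
  using assms set_prism_simplex[of s j t] by (auto simp: tuples_def)

section \<open>Cocycles invariant under a subgroup\<close>

context group
begin

text \<open>Choosing a representative \<open>r\<close> of every right coset \<open>Hg\<close> gives \<open>\<sigma> g = g r\<inverse>\<close>.\<close>

lemma subgroup_equivariant_retraction:
  assumes H: "subgroup H G"
  obtains \<sigma> where "\<And>g. g \<in> carrier G \<Longrightarrow> \<sigma> g \<in> H"
    and "\<And>h g. h \<in> H \<Longrightarrow> g \<in> carrier G \<Longrightarrow> \<sigma> (h \<otimes> g) = h \<otimes> \<sigma> g"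
proof -
  define rep where "rep g = (SOME r. r \<in> H #> g)" for g
  have rep: "rep g \<in> H #> g" if "g \<in> carrier G" for g
    unfolding rep_def using rcos_self[OF that H] by (rule someI)
  have rep_carrier: "rep g \<in> carrier G" if "g \<in> carrier G" for g
    using subgroup.elemrcos_carrier[OF H is_group that rep[OF that]] .
  show thesis
  proof (rule that[of "\<lambda>g. g \<otimes> inv (rep g)"])
    fix g assume g: "g \<in> carrier G"
    have "rep g \<otimes> inv g \<in> H"
      using subgroup.rcos_module_imp[OF H is_group g rep[OF g]] .
    then have "inv (rep g \<otimes> inv g) \<in> H"
      by (rule subgroup.m_inv_closed[OF H])
    then show "g \<otimes> inv (rep g) \<in> H"
      using g rep_carrier[OF g] by (simp add: inv_mult_group)
  next
    fix h g assume h: "h \<in> H" and g: "g \<in> carrier G"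
    have hG: "h \<in> carrier G"
      using h subgroup.mem_carrier[OF H] by blast
    have "H #> (h \<otimes> g) = (H #> h) #> g"
      using subgroup.subset[OF H] hG g by (simp add: coset_mult_assoc)
    also have "H #> h = H"
      by (rule subgroup.rcos_const[OF H is_group h])
    finally have "H #> (h \<otimes> g) = H #> g" .
    then have "rep (h \<otimes> g) = rep g"
      by (simp add: rep_def)
    then show "h \<otimes> g \<otimes> inv (rep (h \<otimes> g)) = h \<otimes> (g \<otimes> inv (rep g))"
      using hG g rep_carrier[OF g] by (simp add: m_assoc)
  qed
qed

lemma invariant_bcochain_retraction:
  assumes \<sigma>H: "\<And>g. g \<in> carrier G \<Longrightarrow> \<sigma> g \<in> H"
    and \<sigma>_equivariant: "\<And>h g. h \<in> H \<Longrightarrow> g \<in> carrier G \<Longrightarrow> \<sigma> (h \<otimes> g) = h \<otimes> \<sigma> g"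
    and b: "invariant_bcochain (G\<lparr>carrier := H\<rparr>) H k b"
  shows "invariant_bcochain G H k (\<lambda>t. b (map \<sigma> t))"
proof -
  have \<sigma>_tuples: "map \<sigma> t \<in> tuples (G\<lparr>carrier := H\<rparr>) m" if "t \<in> tuples G m" for t m
    using that \<sigma>H by (auto simp: tuples_def)
  obtain C where C: "\<forall>t\<in>tuples (G\<lparr>carrier := H\<rparr>) (k+1). \<bar>b t\<bar> \<le> C"
    using b unfolding invariant_bcochain_def by blast
  have "\<bar>b (map \<sigma> t)\<bar> \<le> C" if "t \<in> tuples G (k+1)" for t
    using C \<sigma>_tuples[OF that] by blast
  moreover have "b (map \<sigma> (map (\<lambda>x. h \<otimes> x) t)) = b (map \<sigma> t)"
    if h: "h \<in> H" and t: "t \<in> tuples G (k+1)" for h t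
  proof -
    have "map \<sigma> (map (\<lambda>x. h \<otimes> x) t) = map (\<lambda>x. h \<otimes> x) (map \<sigma> t)"
      using t h \<sigma>_equivariant by (auto simp: tuples_def)
    moreover have "b (map (\<lambda>x. h \<otimes> x) (map \<sigma> t)) = b (map \<sigma> t)"
      using b h \<sigma>_tuples[OF t] unfolding invariant_bcochain_def by (simp del: map_map)
    ultimately show ?thesis
      by (simp only:)
  qed
  ultimately show ?thesis
    unfolding invariant_bcochain_def by blast
qed

lemma invariant_bcochain_prism_operator:
  assumes \<sigma>G: "\<And>g. g \<in> carrier G \<Longrightarrow> \<sigma> g \<in> carrier G"
    and \<sigma>_equivariant: "\<And>h g. h \<in> H \<Longrightarrow> g \<in> carrier G \<Longrightarrow> \<sigma> (h \<otimes> g) = h \<otimes> \<sigma> g"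
    and F: "invariant_bcochain G H (Suc k) F"
  shows "invariant_bcochain G H k (prism_operator \<sigma> F)"
proof -
  have simplex_tuples: "prism_simplex \<sigma> j t \<in> tuples G (Suc k + 1)"
    if "t \<in> tuples G (k+1)" "j < k + 1" for t j
    using prism_simplex_in_tuples[of G \<sigma> t "k + 1" j] \<sigma>G that by simp
  obtain C where C: "\<forall>t\<in>tuples G (Suc k + 1). \<bar>F t\<bar> \<le> C"
    using F unfolding invariant_bcochain_def by blast
  have "\<bar>prism_operator \<sigma> F t\<bar> \<le> real (k + 1) * C" if t: "t \<in> tuples G (k+1)" for t
  proof -
    have "\<bar>prism_operator \<sigma> F t\<bar> \<le> real (length t) * C"
      using C simplex_tuples[OF t] t by (intro abs_prism_operator_le) (auto simp: tuples_def)
    then show ?thesis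
      using t by (simp add: tuples_def)
  qed
  moreover have "prism_operator \<sigma> F (map (\<lambda>x. h \<otimes> x) t) = prism_operator \<sigma> F t"
    if h: "h \<in> H" and t: "t \<in> tuples G (k+1)" for h t
  proof -
    have "prism_operator \<sigma> F (map (\<lambda>x. h \<otimes> x) t) = prism_operator \<sigma> (\<lambda>u. F (map (\<lambda>x. h \<otimes> x) u)) t"
      using t h \<sigma>_equivariant by (intro prism_operator_map) (auto simp: tuples_def)
    also have "\<dots> = prism_operator \<sigma> F t"
      unfolding prism_operator_def
      using F h simplex_tuples[OF t] t by (intro sum.cong refl) (simp add: invariant_bcochain_def tuples_def)
    finally show ?thesis .
  qed
  ultimately show ?thesis
    unfolding invariant_bcochain_def by blast
qed

lemma subgroup_cocycle_is_coboundary: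
  assumes H: "subgroup H G" and acyclic: "Hb_trivial_vanishes (G\<lparr>carrier := H\<rparr>) (Suc k)"
    and F: "invariant_bcochain G H (Suc k) F"
    and F_cocycle: "\<forall>t\<in>tuples G (Suc k + 2). hcoboundary F t = 0"
  obtains B where "invariant_bcochain G H k B" and "\<forall>t\<in>tuples G (Suc k + 1). hcoboundary B t = F t"
proof -
  have H_carrier: "H \<subseteq> carrier G"
    using H by (rule subgroup.subset)
  obtain \<sigma> where \<sigma>H: "\<And>g. g \<in> carrier G \<Longrightarrow> \<sigma> g \<in> H"
    and \<sigma>_equivariant: "\<And>h g. h \<in> H \<Longrightarrow> g \<in> carrier G \<Longrightarrow> \<sigma> (h \<otimes> g) = h \<otimes> \<sigma> g"
    using subgroup_equivariant_retraction[OF H] by blast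
  have \<sigma>G: "\<And>g. g \<in> carrier G \<Longrightarrow> \<sigma> g \<in> carrier G"
    using \<sigma>H H_carrier by blast
  obtain b where b: "invariant_bcochain (G\<lparr>carrier := H\<rparr>) H k b"
    and b_cob: "\<forall>t\<in>tuples (G\<lparr>carrier := H\<rparr>) (Suc k + 1). hcoboundary b t = F t"
    by (rule Hb_trivial_vanishes_subgroupD[OF H_carrier acyclic F F_cocycle])
  define B where "B = (\<lambda>t. b (map \<sigma> t) + prism_operator \<sigma> F t)"
  show thesis
  proof (rule that)
    show "invariant_bcochain G H k B"
      unfolding B_def
      using invariant_bcochain_retraction[OF \<sigma>H \<sigma>_equivariant b]
        invariant_bcochain_prism_operator[OF \<sigma>G \<sigma>_equivariant F]
      by (rule invariant_bcochain_add)
    show "\<forall>t\<in>tuples G (Suc k + 1). hcoboundary B t = F t"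
    proof
      fix t assume t: "t \<in> tuples G (Suc k + 1)"
      have "map \<sigma> t \<in> tuples (G\<lparr>carrier := H\<rparr>) (Suc k + 1)"
        using t \<sigma>H by (auto simp: tuples_def)
      then have "hcoboundary (\<lambda>u. b (map \<sigma> u)) t = F (map \<sigma> t)"
        using b_cob by (simp add: hcoboundary_map)
      moreover have "hcoboundary (prism_operator \<sigma> F) t = F t - F (map \<sigma> t)"
      proof (rule hcoboundary_prism_operator_cocycle)
        fix j assume "j < length t"
        then have "prism_simplex \<sigma> j t \<in> tuples G (Suc k + 2)"
          using prism_simplex_in_tuples[of G \<sigma> t "Suc k + 1" j] \<sigma>G t by (simp add: tuples_def)
        then show "hcoboundary F (prism_simplex \<sigma> j t) = 0"
          using F_cocycle by blast
      qed
      ultimately show "hcoboundary B t = F t"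
        by (simp add: B_def hcoboundary_add)
    qed
  qed
qed

end

section \<open>Orbits and induced cochains\<close>

sublocale group_action \<subseteq> group G
  using group_hom group_hom.axioms(1) by blast

context group_action
begin

lemma translate_tuples: "a \<in> carrier G \<Longrightarrow> t \<in> tuples G m \<Longrightarrow> map (\<lambda>z. a \<otimes> z) t \<in> tuples G m"
  by (auto simp: tuples_def)

lemma orbit_iff: "z \<in> orbit G \<phi> y \<longleftrightarrow> (\<exists>g\<in>carrier G. \<phi> g y = z)"
  unfolding orbit_def by blast

lemma orbit_subset: "y \<in> E \<Longrightarrow> orbit G \<phi> y \<subseteq> E"
  unfolding orbit_def using element_image by blast

lemma orbit_act_eq:
  assumes g: "g \<in> carrier G" and y: "y \<in> E"
  shows "orbit G \<phi> (\<phi> g y) = orbit G \<phi> y"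
proof -
  have gy: "\<phi> g y \<in> orbit G \<phi> y"
    using g unfolding orbit_def by blast
  have gy_E: "\<phi> g y \<in> E"
    using element_image g y by blast
  have y_gy: "y \<in> orbit G \<phi> (\<phi> g y)"
    using orbit_sym[OF y gy_E gy] .
  show ?thesis
  proof
    show "orbit G \<phi> (\<phi> g y) \<subseteq> orbit G \<phi> y"
      using orbit_trans[OF y gy_E _ gy] orbit_subset[OF gy_E] by blast
    show "orbit G \<phi> y \<subseteq> orbit G \<phi> (\<phi> g y)"
      using orbit_trans[OF gy_E y _ y_gy] orbit_subset[OF y] by blast
  qed
qed

lemma stabilizer_conjugate:
  assumes a: "a \<in> carrier G" and a': "a' \<in> carrier G" and g: "g \<in> carrier G" and x: "x \<in> E"
    and ax: "\<phi> a x = y" and a'x: "\<phi> a' x = \<phi> (inv g) y"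
  shows "inv a \<otimes> g \<otimes> a' \<in> stabilizer G \<phi> x"
proof -
  have y: "y \<in> E"
    using element_image[OF a x ax] .
  have "\<phi> (inv a \<otimes> g \<otimes> a') x = \<phi> (inv a) (\<phi> g (\<phi> a' x))"
    using a a' g x by (simp add: composition_rule element_image[OF a' x refl])
  also have "\<phi> a' x = \<phi> (inv g) y"
    by (fact a'x)
  also have "\<phi> g (\<phi> (inv g) y) = y"
    using orbit_sym_aux[OF inv_closed[OF g] y refl] g by simp
  also have "\<phi> (inv a) y = x"
    using orbit_sym_aux[OF a x ax] .
  finally show ?thesis
    using a a' g by (simp add: stabilizer_def)
qed

lemma invariant_bcochain_evaluation:
  assumes x: "x \<in> E" and f: "is_bcochain G E \<phi> k f"
  shows "invariant_bcochain G (stabilizer G \<phi> x) k (\<lambda>t. f t x)"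
proof -
  have "\<phi> (inv h) x = x" if "h \<in> stabilizer G \<phi> x" for h
    using stabilizer_m_inv_closed[OF x that] by (simp add: stabilizer_def)
  moreover have "stabilizer G \<phi> x \<subseteq> carrier G"
    by (rule stabilizer_subset)
  ultimately show ?thesis
    using f x unfolding is_bcochain_def invariant_bcochain_def by (metis subsetD)
qed

lemma stabilizer_primitives:
  assumes acyclic: "\<And>x. x \<in> R \<Longrightarrow> boundedly_acyclic n (G\<lparr>carrier := stabilizer G \<phi> x\<rparr>)"
    and R: "R \<subseteq> E" and "Suc k \<le> n"
    and f: "is_bcochain G E \<phi> (Suc k) f"
    and f_cocycle: "\<forall>t\<in>tuples G (Suc k + 2). \<forall>y\<in>E. coboundary f t y = 0"
  obtains B where "\<And>x. x \<in> R \<Longrightarrow> invariant_bcochain G (stabilizer G \<phi> x) k (B x)"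
    and "\<And>x. x \<in> R \<Longrightarrow> \<forall>t\<in>tuples G (Suc k + 1). hcoboundary (B x) t = f t x"
proof -
  have "\<exists>B. invariant_bcochain G (stabilizer G \<phi> x) k B \<and>
      (\<forall>t\<in>tuples G (Suc k + 1). hcoboundary B t = f t x)" if x: "x \<in> R" for x
  proof -
    have xE: "x \<in> E"
      using x R by blast
    show ?thesis
    proof (rule subgroup_cocycle_is_coboundary)
      show "subgroup (stabilizer G \<phi> x) G"
        using xE by (rule stabilizer_subgroup)
      show "Hb_trivial_vanishes (G\<lparr>carrier := stabilizer G \<phi> x\<rparr>) (Suc k)"
        using acyclic[OF x] \<open>Suc k \<le> n\<close> unfolding boundedly_acyclic_def by simp
      show "invariant_bcochain G (stabilizer G \<phi> x) (Suc k) (\<lambda>t. f t x)"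
        using xE f by (rule invariant_bcochain_evaluation)
      show "\<forall>t\<in>tuples G (Suc k + 2). hcoboundary (\<lambda>t. f t x) t = 0"
        using f_cocycle xE by (simp add: coboundary_eq_hcoboundary)
    qed (intro exI conjI)
  qed
  then have "\<forall>x\<in>R. \<exists>B. invariant_bcochain G (stabilizer G \<phi> x) k B \<and>
      (\<forall>t\<in>tuples G (Suc k + 1). hcoboundary B t = f t x)"
    by blast
  then obtain B where "\<forall>x\<in>R. invariant_bcochain G (stabilizer G \<phi> x) k (B x) \<and>
      (\<forall>t\<in>tuples G (Suc k + 1). hcoboundary (B x) t = f t x)"
    by (rule bchoice[THEN exE])
  then show thesis
    using that by blast
qed

end

locale orbit_section = group_action +
  fixes r and \<gamma>
  assumes representative_closed: "y \<in> E \<Longrightarrow> r y \<in> E"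
    and representative_invariant: "g \<in> carrier G \<Longrightarrow> y \<in> E \<Longrightarrow> r (\<phi> g y) = r y"
    and section_closed: "y \<in> E \<Longrightarrow> \<gamma> y \<in> carrier G"
    and section_moves: "y \<in> E \<Longrightarrow> \<phi> (\<gamma> y) (r y) = y"

lemma (in group_action) orbit_section_exists:
  assumes "\<forall>Orb\<in>orbits G E \<phi>. \<exists>x\<in>Orb. P x" and "finite (orbits G E \<phi>)"
  obtains r \<gamma> where "orbit_section G E \<phi> r \<gamma>" and "\<And>y. y \<in> E \<Longrightarrow> P (r y)"
    and "finite (r ` E)"
proof -
  obtain \<rho> where \<rho>: "\<And>Orb. Orb \<in> orbits G E \<phi> \<Longrightarrow> \<rho> Orb \<in> Orb \<and> P (\<rho> Orb)"
    using assms(1) by metis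
  define r where "r y = \<rho> (orbit G \<phi> y)" for y
  have r_orbit: "r y \<in> orbit G \<phi> y" and r_P: "P (r y)" if "y \<in> E" for y
    using \<rho> that unfolding r_def orbits_def by blast+
  have r_E: "r y \<in> E" if "y \<in> E" for y
    using r_orbit[OF that] orbit_subset[OF that] by blast
  have "\<exists>a\<in>carrier G. \<phi> a (r y) = y" if "y \<in> E" for y
    using orbit_sym[OF that r_E[OF that] r_orbit[OF that]] by (simp only: orbit_iff)
  then obtain \<gamma> where "\<And>y. y \<in> E \<Longrightarrow> \<gamma> y \<in> carrier G" "\<And>y. y \<in> E \<Longrightarrow> \<phi> (\<gamma> y) (r y) = y"
    by metis
  moreover have "r (\<phi> g y) = r y" if "g \<in> carrier G" "y \<in> E" for g y
    using orbit_act_eq[OF that] by (simp add: r_def)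
  ultimately have "orbit_section G E \<phi> r \<gamma>"
    using r_E by (intro orbit_section.intro orbit_section_axioms.intro group_action_axioms)
  moreover have "r ` E \<subseteq> \<rho> ` orbits G E \<phi>"
    unfolding r_def orbits_def by blast
  then have "finite (r ` E)"
    using assms(2) by (rule finite_subset[OF _ finite_imageI])
  ultimately show thesis
    using that r_P by blast
qed

context orbit_section
begin

definition induced_cochain where
  "induced_cochain B t y = B (r y) (map (\<lambda>z. inv (\<gamma> y) \<otimes> z) t)"

lemma induced_cochain_equivariant:
  assumes B: "invariant_bcochain G (stabilizer G \<phi> (r y)) k (B (r y))"
    and g: "g \<in> carrier G" and t: "t \<in> tuples G (k+1)" and y: "y \<in> E"
  shows "induced_cochain B (map (\<lambda>h. g \<otimes> h) t) y = induced_cochain B t (\<phi> (inv g) y)"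
proof -
  define y' where "y' = \<phi> (inv g) y"
  have y': "y' \<in> E" and r_y': "r y' = r y"
    using element_image[OF inv_closed[OF g] y] representative_invariant[OF inv_closed[OF g] y]
    by (simp_all add: y'_def)
  define h where "h = inv (\<gamma> y) \<otimes> g \<otimes> \<gamma> y'"
  have "\<phi> (\<gamma> y') (r y) = \<phi> (inv g) y"
    using section_moves[OF y'] r_y' by (simp add: y'_def)
  then have h: "h \<in> stabilizer G \<phi> (r y)"
    unfolding h_def using section_closed y y' g representative_closed section_moves
    by (intro stabilizer_conjugate) auto
  have "inv (\<gamma> y) \<otimes> (g \<otimes> z) = h \<otimes> (inv (\<gamma> y') \<otimes> z)" if "z \<in> carrier G" for z
    using that g section_closed[OF y] section_closed[OF y']
    by (simp add: h_def m_assoc) (metis inv_closed inv_solve_left m_closed)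
  then have "map (\<lambda>z. inv (\<gamma> y) \<otimes> z) (map (\<lambda>h. g \<otimes> h) t) =
      map (\<lambda>z. h \<otimes> z) (map (\<lambda>z. inv (\<gamma> y') \<otimes> z) t)"
    using t by (auto simp: tuples_def)
  moreover have "B (r y) (map (\<lambda>z. h \<otimes> z) (map (\<lambda>z. inv (\<gamma> y') \<otimes> z) t)) =
      B (r y) (map (\<lambda>z. inv (\<gamma> y') \<otimes> z) t)"
    using B h translate_tuples[OF inv_closed[OF section_closed[OF y']] t]
    unfolding invariant_bcochain_def by (simp del: map_map)
  ultimately show ?thesis
    unfolding induced_cochain_def y'_def[symmetric] r_y' by (simp only:)
qed

lemma coboundary_induced_cochain:
  assumes B_cob: "\<forall>t\<in>tuples G (k + 1). hcoboundary (B (r y)) t = f t (r y)"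
    and f: "is_bcochain G E \<phi> k f" and t: "t \<in> tuples G (k + 1)" and y: "y \<in> E"
  shows "coboundary (induced_cochain B) t y = f t y"
proof -
  have "coboundary (induced_cochain B) t y = hcoboundary (B (r y)) (map (\<lambda>z. inv (\<gamma> y) \<otimes> z) t)"
    unfolding coboundary_eq_hcoboundary induced_cochain_def by (rule hcoboundary_map)
  also have "\<dots> = f (map (\<lambda>z. inv (\<gamma> y) \<otimes> z) t) (r y)"
    using B_cob translate_tuples[OF inv_closed[OF section_closed[OF y]] t] by blast
  also have "\<dots> = f t (\<phi> (\<gamma> y) (r y))"
    using f t section_closed[OF y] representative_closed[OF y] unfolding is_bcochain_def by simp
  finally show ?thesis
    using section_moves[OF y] by simp
qed

lemma induced_cochain_primitive:
  assumes finite: "finite (r ` E)"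
    and f: "is_bcochain G E \<phi> (Suc k) f"
    and B: "\<And>x. x \<in> r ` E \<Longrightarrow> invariant_bcochain G (stabilizer G \<phi> x) k (B x)"
    and B_cob: "\<And>x. x \<in> r ` E \<Longrightarrow> \<forall>t\<in>tuples G (Suc k + 1). hcoboundary (B x) t = f t x"
  shows "is_bcochain G E \<phi> k (induced_cochain B)"
    and "\<forall>t\<in>tuples G (Suc k + 1). \<forall>y\<in>E. coboundary (induced_cochain B) t y = f t y"
proof -
  obtain C where C: "\<And>x t. x \<in> r ` E \<Longrightarrow> t \<in> tuples G (k+1) \<Longrightarrow> \<bar>B x t\<bar> \<le> C x"
    using B unfolding invariant_bcochain_def by metis
  have bounded: "\<bar>induced_cochain B t y\<bar> \<le> (\<Sum>x\<in>r ` E. \<bar>C x\<bar>)"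
    if t: "t \<in> tuples G (k+1)" and y: "y \<in> E" for t y
  proof -
    have "\<bar>induced_cochain B t y\<bar> \<le> C (r y)"
      unfolding induced_cochain_def
      using C[OF imageI[OF y] translate_tuples[OF inv_closed[OF section_closed[OF y]] t]] .
    also have "\<dots> \<le> (\<Sum>x\<in>r ` E. \<bar>C x\<bar>)"
      using finite y by (intro order.trans[OF abs_ge_self[of "C (r y)"]] member_le_sum) auto
    finally show ?thesis .
  qed
  show "is_bcochain G E \<phi> k (induced_cochain B)"
    unfolding is_bcochain_def
  proof (intro conjI exI[of _ "\<Sum>x\<in>r ` E. \<bar>C x\<bar>"] ballI)
    show "\<bar>induced_cochain B t y\<bar> \<le> (\<Sum>x\<in>r ` E. \<bar>C x\<bar>)" if "t \<in> tuples G (k+1)" "y \<in> E" for t y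
      using bounded that .
    show "induced_cochain B (map (\<lambda>h. g \<otimes> h) t) y = induced_cochain B t (\<phi> (inv g) y)"
      if "g \<in> carrier G" "t \<in> tuples G (k+1)" "y \<in> E" for g t y
      using B[OF imageI[OF \<open>y \<in> E\<close>]] that by (rule induced_cochain_equivariant)
  qed
  show "\<forall>t\<in>tuples G (Suc k + 1). \<forall>y\<in>E. coboundary (induced_cochain B) t y = f t y"
  proof (intro ballI)
    fix t y assume t: "t \<in> tuples G (Suc k + 1)" and y: "y \<in> E"
    show "coboundary (induced_cochain B) t y = f t y"
      using B_cob[OF imageI[OF y]] f t y by (rule coboundary_induced_cochain)
  qed
qed

lemma Hb_linf_vanishes_from_stabilizers:
  assumes finite: "finite (r ` E)"
    and acyclic: "\<And>y. y \<in> E \<Longrightarrow> boundedly_acyclic n (G\<lparr>carrier := stabilizer G \<phi> (r y)\<rparr>)"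
    and "Suc k \<le> n"
  shows "Hb_linf_vanishes G E \<phi> (Suc k)"
  unfolding Hb_linf_vanishes_def
proof (intro allI impI, elim conjE)
  fix f assume f: "is_bcochain G E \<phi> (Suc k) f"
    and f_cocycle: "\<forall>t\<in>tuples G (Suc k + 2). \<forall>y\<in>E. coboundary f t y = 0"
  have acyclic_r: "\<And>x. x \<in> r ` E \<Longrightarrow> boundedly_acyclic n (G\<lparr>carrier := stabilizer G \<phi> x\<rparr>)"
    using acyclic by blast
  have r_E: "r ` E \<subseteq> E"
    using representative_closed by blast
  obtain B where B: "\<And>x. x \<in> r ` E \<Longrightarrow> invariant_bcochain G (stabilizer G \<phi> x) k (B x)"
    and B_cob: "\<And>x. x \<in> r ` E \<Longrightarrow> \<forall>t\<in>tuples G (Suc k + 1). hcoboundary (B x) t = f t x"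
    using stabilizer_primitives[OF acyclic_r r_E \<open>Suc k \<le> n\<close> f f_cocycle] by blast
  show "\<exists>b. is_bcochain G E \<phi> (Suc k - 1) b \<and>
      (\<forall>t\<in>tuples G (Suc k + 1). \<forall>y\<in>E. coboundary b t y = f t y)"
    using induced_cochain_primitive[OF finite f B B_cob] by auto
qed

end

theorem lemma6p10:
  fixes G :: "('g, 'm) monoid_scheme" and X :: "'x set" and \<phi> :: "'g \<Rightarrow> 'x \<Rightarrow> 'x"
    and n :: nat
  assumes "group G"
    and "group_action G X \<phi>"
    and "finite (orbits G X \<phi>)"
    and "\<forall>Orb\<in>orbits G X \<phi>. \<exists>x\<in>Orb.
           boundedly_acyclic n (G\<lparr>carrier := stabilizer G \<phi> x\<rparr>)"
  shows "\<forall>k\<in>{1..n}. Hb_linf_vanishes G X \<phi> k"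
proof
  fix k assume "k \<in> {1..n}"
  then obtain m where k: "k = Suc m" and m: "Suc m \<le> n"
    by (metis atLeastAtMost_iff not0_implies_Suc not_one_le_zero)
  interpret group_action G X \<phi>
    by fact
  obtain r \<gamma> where transversal: "orbit_section G X \<phi> r \<gamma>"
    and acyclic: "\<And>y. y \<in> X \<Longrightarrow> boundedly_acyclic n (G\<lparr>carrier := stabilizer G \<phi> (r y)\<rparr>)"
    and finite: "finite (r ` X)"
    using orbit_section_exists[OF assms(4,3)] by metis
  show "Hb_linf_vanishes G X \<phi> k"
    unfolding k using orbit_section.Hb_linf_vanishes_from_stabilizers[OF transversal finite acyclic m] .
qed

end
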